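(* For all $m,n\ge 0$, the subgroup $\mathrm{GL}(m)\times\mathrm{GL}(n)\subset\mathrm{GL}(m+n)$ is parabolically connected; equivalently, for any decomposition $V=U\oplus W$ with $\dim U=m$, $\dim W=n$ and any full flag $V_\bullet$ in $V$, the group $(\mathrm{GL}(U)\times\mathrm{GL}(W))\cap\mathrm{Stab}(V_\bullet)$ is connected.
   Context: All groups are over $\mathbb{C}$ with the Zariski topology. $\mathrm{GL}(m)\times\mathrm{GL}(n)$ is embedded in $\mathrm{GL}(m+n)$ as block-diagonal matrices (equivalently $\mathrm{GL}(U)\times\mathrm{GL}(W)\subset\mathrm{GL}(U\oplus W)$). A closed subgroup $H$ of a reductive group $G$ is parabolically connected if $P\cap H$ is connected for every parabolic subgroup $P\subseteq G$. A full flag is a chain $0\subset V_1\subset\dots\subset V_{m+n}=V$ with $\dim V_i=i$; $\mathrm{Stab}(V_\bullet)$ is the subgroup of $\mathrm{GL}(V)$ preserving every $V_i$. *)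

theory Defs
  imports Complex_Main
begin

text \<open>Conventions. V = C^N with N = m+n. Vectors are functions nat => complex vanishing
outside {0..<N}; N x N matrices are functions nat => nat => complex vanishing outside
{0..<N} x {0..<N}.\<close>

definition vecs :: "nat \<Rightarrow> (nat \<Rightarrow> complex) set" where
  "vecs N = {v. \<forall>i. N \<le> i \<longrightarrow> v i = 0}"

definition mats :: "nat \<Rightarrow> (nat \<Rightarrow> nat \<Rightarrow> complex) set" where
  "mats N = {A. \<forall>i j. (N \<le> i \<or> N \<le> j) \<longrightarrow> A i j = 0}"

definition mat_mult :: "nat \<Rightarrow> (nat \<Rightarrow> nat \<Rightarrow> complex) \<Rightarrow> (nat \<Rightarrow> nat \<Rightarrow> complex) \<Rightarrow> (nat \<Rightarrow> nat \<Rightarrow> complex)" where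
  "mat_mult N A B = (\<lambda>i j. if i < N \<and> j < N then (\<Sum>k<N. A i k * B k j) else 0)"

definition mat_one :: "nat \<Rightarrow> (nat \<Rightarrow> nat \<Rightarrow> complex)" where
  "mat_one N = (\<lambda>i j. if i < N \<and> i = j then 1 else 0)"

definition mat_vec :: "nat \<Rightarrow> (nat \<Rightarrow> nat \<Rightarrow> complex) \<Rightarrow> (nat \<Rightarrow> complex) \<Rightarrow> (nat \<Rightarrow> complex)" where
  "mat_vec N A v = (\<lambda>i. if i < N then (\<Sum>j<N. A i j * v j) else 0)"

definition GL :: "nat \<Rightarrow> (nat \<Rightarrow> nat \<Rightarrow> complex) set" where
  "GL N = {A \<in> mats N. \<exists>B \<in> mats N. mat_mult N A B = mat_one N \<and> mat_mult N B A = mat_one N}"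

definition span_cols :: "nat \<Rightarrow> (nat \<Rightarrow> nat \<Rightarrow> complex) \<Rightarrow> nat set \<Rightarrow> (nat \<Rightarrow> complex) set" where
  "span_cols N g S = {mat_vec N g c | c. c \<in> vecs N \<and> (\<forall>k. k \<notin> S \<longrightarrow> c k = 0)}"

text \<open>The full flag determined by an invertible matrix F: V_i = span of first i columns.\<close>
definition flag_space :: "nat \<Rightarrow> (nat \<Rightarrow> nat \<Rightarrow> complex) \<Rightarrow> nat \<Rightarrow> (nat \<Rightarrow> complex) set" where
  "flag_space N F i = span_cols N F {0..<i}"

inductive_set poly_fun :: "((nat \<Rightarrow> nat \<Rightarrow> complex) \<Rightarrow> complex) set" where
  const: "(\<lambda>A. c) \<in> poly_fun"
| entry: "(\<lambda>A. A i j) \<in> poly_fun"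
| add: "p \<in> poly_fun \<Longrightarrow> q \<in> poly_fun \<Longrightarrow> (\<lambda>A. p A + q A) \<in> poly_fun"
| mult: "p \<in> poly_fun \<Longrightarrow> q \<in> poly_fun \<Longrightarrow> (\<lambda>A. p A * q A) \<in> poly_fun"

definition zariski_closed :: "nat \<Rightarrow> (nat \<Rightarrow> nat \<Rightarrow> complex) set \<Rightarrow> bool" where
  "zariski_closed N C \<longleftrightarrow> (\<exists>P \<subseteq> poly_fun. C = {A \<in> mats N. \<forall>p \<in> P. p A = 0})"

definition zariski_connected :: "nat \<Rightarrow> (nat \<Rightarrow> nat \<Rightarrow> complex) set \<Rightarrow> bool" where
  "zariski_connected N H \<longleftrightarrow>
     \<not> (\<exists>C1 C2. zariski_closed N C1 \<and> zariski_closed N C2 \<and> H \<subseteq> C1 \<union> C2 \<and>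
               H \<inter> C1 \<inter> C2 = {} \<and> H \<inter> C1 \<noteq> {} \<and> H \<inter> C2 \<noteq> {})"

end

theory Submission
  imports Defs "HOL-Library.Function_Algebras" "Jordan_Normal_Form.Determinant"
begin

text \<open>
  The group in question is \<open>H = GL(V) \<inter> L\<close>, where \<open>L\<close> is the set of matrices preserving the
  subspaces \<open>U\<close>, \<open>W\<close> and \<open>V\<^sub>0, \<dots>, V\<^sub>N\<close> of the decomposition and the flag.  The point is
  that \<open>L\<close> is a linear subspace of the matrix space, so \<open>H\<close> is the complement of the
  determinant hypersurface in an affine space, and such a set is Zariski connected: the
  affine line through two points of \<open>H\<close> lies in \<open>L\<close>, it meets the zero set of the determinant
  (a polynomial in the line parameter that does not vanish at 0) in finitely many points,
  and any Zariski closed set meets the line either in all or in finitely many points.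
  Since \<open>\<complex>\<close> is infinite, a separation of \<open>H\<close> by two closed sets is impossible.
\<close>

text \<open>An injective linear map sending a finite-dimensional subspace \<open>S\<close> into itself is onto
  \<open>S\<close>: it sends a basis to an independent set of the same size inside \<open>S\<close>, which must span.
  The ambient space need not be finite-dimensional.\<close>

lemma (in vector_space) inj_on_endo_image_eq:
  assumes S: "subspace S" and fin: "finite T" "S \<subseteq> span T"
    and f: "Vector_Spaces.linear scale scale f" and inj: "inj_on f S" and into: "f ` S \<subseteq> S"
  shows "f ` S = S"
proof -
  interpret f: module_hom scale scale f using f by (simp add: linear_iff_module_hom)
  obtain B where B: "B \<subseteq> S" "independent B" "S \<subseteq> span B"
    using basis_exists by blast
  have finB: "finite B" using independent_span_bound[OF fin(1) B(2)] B(1) fin(2) by blast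
  have span_B: "span B = S" using B S span_minimal by (meson span_subspace)
  have indep_fB: "independent (f ` B)"
    using f.independent_inj_on_image[OF B(2)] inj span_B by simp
  have card_fB: "card (f ` B) = card B" using card_image inj B(1) inj_on_subset by metis
  have "S \<subseteq> span (f ` B)"
  proof
    fix a assume a: "a \<in> S"
    show "a \<in> span (f ` B)"
    proof (rule ccontr)
      assume a_out: "a \<notin> span (f ` B)"
      have "independent (insert a (f ` B))" using independent_insertI[OF a_out indep_fB] .
      moreover have "insert a (f ` B) \<subseteq> span B" using a B into span_B by auto
      ultimately have "card (insert a (f ` B)) \<le> card B"
        using independent_span_bound[OF finB] by simp
      moreover have "a \<notin> f ` B" using a_out span_base by blast
      ultimately show False using card_fB finB by simp
    qed
  qed
  also have "span (f ` B) = f ` span B" by (rule f.span_image)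
  finally show ?thesis using span_B into by auto
qed

definition vscale :: "complex \<Rightarrow> (nat \<Rightarrow> complex) \<Rightarrow> (nat \<Rightarrow> complex)" where
  "vscale c v = (\<lambda>i. c * v i)"

interpretation fv: vector_space vscale
  by unfold_locales (auto simp: vscale_def algebra_simps)

lemma mat_vec_add: "mat_vec N A (v + w) = mat_vec N A v + mat_vec N A w"
  by (auto simp: mat_vec_def algebra_simps sum.distrib)

lemma mat_vec_vscale: "mat_vec N A (vscale c v) = vscale c (mat_vec N A v)"
  by (auto simp: mat_vec_def vscale_def sum_distrib_left algebra_simps intro!: sum.cong)

lemma mat_vec_linear: "Vector_Spaces.linear vscale vscale (mat_vec N A)"
  unfolding linear_iff_module_hom module_hom_iff
  using fv.module_axioms by (simp add: mat_vec_add mat_vec_vscale)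

lemma mat_vec_mat_mult: "mat_vec N B (mat_vec N A v) = mat_vec N (mat_mult N B A) v"
proof
  fix i
  show "mat_vec N B (mat_vec N A v) i = mat_vec N (mat_mult N B A) v i"
  proof (cases "i < N")
    case True
    have "(\<Sum>j<N. B i j * (\<Sum>k<N. A j k * v k)) = (\<Sum>j<N. \<Sum>k<N. B i j * A j k * v k)"
      by (simp add: sum_distrib_left mult.assoc)
    also have "\<dots> = (\<Sum>k<N. \<Sum>j<N. B i j * A j k * v k)" by (rule sum.swap)
    also have "\<dots> = (\<Sum>k<N. (\<Sum>j<N. B i j * A j k) * v k)"
      by (simp add: sum_distrib_right)
    finally show ?thesis using True by (simp add: mat_vec_def mat_mult_def)
  qed (simp add: mat_vec_def)
qed

lemma mat_vec_mat_one: "v \<in> vecs N \<Longrightarrow> mat_vec N (mat_one N) v = v"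
proof
  fix i assume v: "v \<in> vecs N"
  show "mat_vec N (mat_one N) v i = v i"
  proof (cases "i < N")
    case True
    have "(\<Sum>j<N. (if i < N \<and> i = j then 1 else 0) * v j) = (\<Sum>j<N. if j = i then v i else 0)"
      by (rule sum.cong) auto
    then show ?thesis using True by (simp add: mat_vec_def mat_one_def)
  qed (use v in \<open>auto simp: mat_vec_def vecs_def\<close>)
qed

lemma GL_inj_on_vecs:
  assumes "A \<in> GL N" shows "inj_on (mat_vec N A) (vecs N)"
proof -
  obtain B where "mat_mult N B A = mat_one N" using assms unfolding GL_def by blast
  then have "\<And>v. v \<in> vecs N \<Longrightarrow> mat_vec N B (mat_vec N A v) = v"
    by (simp add: mat_vec_mat_mult mat_vec_mat_one)
  then show ?thesis by (metis inj_onI)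
qed

definition unit_vec :: "nat \<Rightarrow> nat \<Rightarrow> complex" where
  "unit_vec k = (\<lambda>i. if i = k then 1 else 0)"

lemma vecs_subset_span_unit_vecs: "vecs N \<subseteq> fv.span (unit_vec ` {..<N})"
proof
  fix v assume v: "v \<in> vecs N"
  have "v = (\<Sum>k<N. vscale (v k) (unit_vec k))"
  proof
    fix i
    have "(\<Sum>k<N. vscale (v k) (unit_vec k)) i = (\<Sum>k<N. vscale (v k) (unit_vec k) i)"
      by (induction N) (simp_all add: plus_fun_def)
    also have "\<dots> = (\<Sum>k<N. if k = i then v i else 0)"
      by (rule sum.cong) (auto simp: vscale_def unit_vec_def)
    also have "\<dots> = v i" using v by (auto simp: vecs_def)
    finally show "v i = (\<Sum>k<N. vscale (v k) (unit_vec k)) i" by simp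
  qed
  also have "\<dots> \<in> fv.span (unit_vec ` {..<N})"
    by (intro fv.span_sum fv.span_scale fv.span_base) simp
  finally show "v \<in> fv.span (unit_vec ` {..<N})" .
qed

lemma span_cols_subset_vecs: "span_cols N X I \<subseteq> vecs N"
  unfolding span_cols_def by (auto simp: mat_vec_def vecs_def)

lemma span_cols_subspace: "fv.subspace (span_cols N X I)"
  unfolding fv.subspace_def
proof (intro conjI ballI allI)
  show "0 \<in> span_cols N X I"
    unfolding span_cols_def
    by (rule CollectI, rule exI[of _ 0]) (auto simp: mat_vec_def vecs_def)
next
  fix x y assume "x \<in> span_cols N X I" "y \<in> span_cols N X I"
  then obtain c d where "x = mat_vec N X c" "c \<in> vecs N" "\<forall>k. k \<notin> I \<longrightarrow> c k = 0"
     "y = mat_vec N X d" "d \<in> vecs N" "\<forall>k. k \<notin> I \<longrightarrow> d k = 0"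
    unfolding span_cols_def by blast
  then show "x + y \<in> span_cols N X I"
    unfolding span_cols_def
    by (intro CollectI exI[of _ "c + d"]) (auto simp: mat_vec_add vecs_def)
next
  fix a x assume "x \<in> span_cols N X I"
  then obtain c where c: "x = mat_vec N X c" "c \<in> vecs N" "\<forall>k. k \<notin> I \<longrightarrow> c k = 0"
    unfolding span_cols_def by blast
  then show "vscale a x \<in> span_cols N X I"
    unfolding span_cols_def
  proof (intro CollectI exI[of _ "vscale a c"] conjI)
    show "vscale a x = mat_vec N X (vscale a c)" by (simp add: c(1) mat_vec_vscale)
  qed (use c in \<open>auto simp: vecs_def vscale_def\<close>)
qed

subsection \<open>Stabilisers as linear conditions\<close>

text \<open>For a column span \<open>S\<close> this is a
  linear subspace of the matrix space, and on \<open>GL\<close> it coincides with the stabiliser of \<open>S\<close>.\<close>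

definition preserving :: "nat \<Rightarrow> (nat \<Rightarrow> complex) set \<Rightarrow> (nat \<Rightarrow> nat \<Rightarrow> complex) set" where
  "preserving N S = {A \<in> mats N. mat_vec N A ` S \<subseteq> S}"

lemma GL_stabilises_iff_preserving:
  assumes "A \<in> GL N"
  shows "mat_vec N A ` span_cols N X I = span_cols N X I \<longleftrightarrow> A \<in> preserving N (span_cols N X I)"
proof
  assume "A \<in> preserving N (span_cols N X I)"
  then have into: "mat_vec N A ` span_cols N X I \<subseteq> span_cols N X I"
    by (simp add: preserving_def)
  show "mat_vec N A ` span_cols N X I = span_cols N X I"
  proof (rule fv.inj_on_endo_image_eq[OF span_cols_subspace _ _ mat_vec_linear _ into])
    show "finite (unit_vec ` {..<N})" by simp
    show "span_cols N X I \<subseteq> fv.span (unit_vec ` {..<N})"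
      using span_cols_subset_vecs vecs_subset_span_unit_vecs by blast
    show "inj_on (mat_vec N A) (span_cols N X I)"
      using GL_inj_on_vecs[OF assms] span_cols_subset_vecs by (rule inj_on_subset)
  qed
qed (use assms in \<open>auto simp: preserving_def GL_def\<close>)

text \<open>Translation to the matrices of the Jordan normal form library, whose determinant we use.\<close>

definition to_mat :: "nat \<Rightarrow> (nat \<Rightarrow> nat \<Rightarrow> complex) \<Rightarrow> complex mat" where
  "to_mat N A = mat N N (\<lambda>(i,j). A i j)"

definition of_mat :: "nat \<Rightarrow> complex mat \<Rightarrow> (nat \<Rightarrow> nat \<Rightarrow> complex)" where
  "of_mat N M = (\<lambda>i j. if i < N \<and> j < N then M $$ (i,j) else 0)"

lemma to_mat_carrier [simp]: "to_mat N A \<in> carrier_mat N N"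
  by (simp add: to_mat_def)

lemma to_mat_mult: "to_mat N (mat_mult N A B) = to_mat N A * to_mat N B"
  by (rule eq_matI) (simp_all add: to_mat_def mat_mult_def scalar_prod_def atLeast0LessThan)

lemma to_mat_one: "to_mat N (mat_one N) = 1\<^sub>m N"
  by (rule eq_matI) (auto simp: to_mat_def mat_one_def)

lemma to_mat_of_mat: "M \<in> carrier_mat N N \<Longrightarrow> to_mat N (of_mat N M) = M"
  by (rule eq_matI) (auto simp: to_mat_def of_mat_def)

lemma to_mat_inj:
  assumes "A \<in> mats N" "B \<in> mats N" and eq: "to_mat N A = to_mat N B"
  shows "A = B"
proof (intro ext)
  fix i j
  show "A i j = B i j"
  proof (cases "i < N \<and> j < N")
    case True
    then have "to_mat N A $$ (i,j) = to_mat N B $$ (i,j)" using eq by simp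
    then show ?thesis using True by (simp add: to_mat_def)
  qed (use assms(1,2) in \<open>auto simp: mats_def\<close>)
qed

lemma GL_iff_det: "A \<in> GL N \<longleftrightarrow> A \<in> mats N \<and> det (to_mat N A) \<noteq> 0"
proof
  assume "A \<in> GL N"
  then obtain B where A: "A \<in> mats N" and AB: "mat_mult N A B = mat_one N"
    unfolding GL_def by blast
  have "det (to_mat N A) * det (to_mat N B) = 1"
    using det_mult[OF to_mat_carrier to_mat_carrier, of N A B] AB
    by (simp add: to_mat_mult[symmetric] to_mat_one)
  then show "A \<in> mats N \<and> det (to_mat N A) \<noteq> 0" using A by auto
next
  assume A: "A \<in> mats N \<and> det (to_mat N A) \<noteq> 0"
  then have "to_mat N A \<in> Units (ring_mat TYPE(complex) N ())"
    by (intro det_non_zero_imp_unit) simp_all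
  then obtain M where M: "M \<in> carrier_mat N N" "M * to_mat N A = 1\<^sub>m N" "to_mat N A * M = 1\<^sub>m N"
    by (auto simp: Units_def ring_mat_def)
  have mats: "mat_mult N X Y \<in> mats N" "mat_one N \<in> mats N" "of_mat N M \<in> mats N" for X Y
    by (simp_all add: mats_def mat_mult_def mat_one_def of_mat_def)
  have "mat_mult N A (of_mat N M) = mat_one N" "mat_mult N (of_mat N M) A = mat_one N"
    by (rule to_mat_inj[OF mats(1,2)], simp add: to_mat_mult to_mat_of_mat M to_mat_one)+
  then show "A \<in> GL N" unfolding GL_def using A mats(3) by blast
qed

subsection \<open>Restriction to affine lines\<close>

definition line :: "(nat \<Rightarrow> nat \<Rightarrow> complex) \<Rightarrow> (nat \<Rightarrow> nat \<Rightarrow> complex) \<Rightarrow> complex \<Rightarrow> (nat \<Rightarrow> nat \<Rightarrow> complex)" where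
  "line A1 A2 t = (\<lambda>i j. A1 i j + t * (A2 i j - A1 i j))"

lemma line_0 [simp]: "line A1 A2 0 = A1" and line_1 [simp]: "line A1 A2 1 = A2"
  by (simp_all add: line_def)

lemma line_mats: "A1 \<in> mats N \<Longrightarrow> A2 \<in> mats N \<Longrightarrow> line A1 A2 t \<in> mats N"
  by (simp add: mats_def line_def)

lemma mat_vec_line:
  "mat_vec N (line A1 A2 t) v = mat_vec N A1 v + vscale t (mat_vec N A2 v - mat_vec N A1 v)"
  by (rule ext) (simp add: mat_vec_def line_def vscale_def algebra_simps sum.distrib
      sum_subtractf sum_distrib_left)

lemma poly_fun_on_line: "p \<in> poly_fun \<Longrightarrow> \<exists>r. \<forall>t. p (line A1 A2 t) = poly r t"
proof (induction rule: poly_fun.induct)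
  case (const c)
  show ?case by (rule exI[of _ "[:c:]"]) simp
next
  case (entry i j)
  show ?case by (rule exI[of _ "[:A1 i j, A2 i j - A1 i j:]"]) (simp add: line_def algebra_simps)
next
  case (add p q)
  then obtain r1 r2 where "\<forall>t. p (line A1 A2 t) = poly r1 t" "\<forall>t. q (line A1 A2 t) = poly r2 t"
    by blast
  then show ?case by (intro exI[of _ "r1 + r2"]) simp
next
  case (mult p q)
  then obtain r1 r2 where "\<forall>t. p (line A1 A2 t) = poly r1 t" "\<forall>t. q (line A1 A2 t) = poly r2 t"
    by blast
  then show ?case by (intro exI[of _ "r1 * r2"]) simp
qed

text \<open>Likewise the determinant: it is the image of the determinant of a matrix of linear
  polynomials under evaluation, a ring homomorphism.\<close>

lemma det_on_line: "\<exists>q. \<forall>t. poly q t = det (to_mat N (line A1 A2 t))"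
proof (intro exI allI)
  fix t :: complex
  let ?P = "mat N N (\<lambda>(i,j). [:A1 i j, A2 i j - A1 i j:])"
  interpret eval: comm_ring_hom "\<lambda>p. poly p t" by unfold_locales auto
  have "map_mat (\<lambda>p. poly p t) ?P = to_mat N (line A1 A2 t)"
    by (rule eq_matI) (auto simp: to_mat_def line_def algebra_simps)
  then show "poly (det ?P) t = det (to_mat N (line A1 A2 t))"
    using eval.hom_det[of ?P] by simp
qed

lemma closed_on_line:
  assumes C: "zariski_closed N C" and A: "A1 \<in> mats N" "A2 \<in> mats N"
  shows "(\<forall>t. line A1 A2 t \<in> C) \<or> finite {t. line A1 A2 t \<in> C}"
proof -
  obtain P where P: "P \<subseteq> poly_fun" "C = {A \<in> mats N. \<forall>p \<in> P. p A = 0}"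
    using C unfolding zariski_closed_def by blast
  show ?thesis
  proof (cases "\<forall>p\<in>P. \<forall>t. p (line A1 A2 t) = 0")
    case True
    then show ?thesis using P line_mats[OF A] by auto
  next
    case False
    then obtain p t0 where p: "p \<in> P" "p (line A1 A2 t0) \<noteq> 0" by blast
    obtain r where r: "\<forall>t. p (line A1 A2 t) = poly r t" using poly_fun_on_line p P(1) by blast
    have "r \<noteq> 0" using r p by auto
    then have "finite {t. poly r t = 0}" by (rule poly_roots_finite)
    moreover have "{t. line A1 A2 t \<in> C} \<subseteq> {t. poly r t = 0}" using P p r by auto
    ultimately show ?thesis using finite_subset by blast
  qed
qed

subsection \<open>Connectedness of the invertible part of a line-closed set\<close>

definition line_closed :: "(nat \<Rightarrow> nat \<Rightarrow> complex) set \<Rightarrow> bool" where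
  "line_closed L \<longleftrightarrow> (\<forall>A1 \<in> L. \<forall>A2 \<in> L. \<forall>t. line A1 A2 t \<in> L)"

lemma line_closed_Int: "line_closed L \<Longrightarrow> line_closed L' \<Longrightarrow> line_closed (L \<inter> L')"
  by (simp add: line_closed_def)

lemma line_closed_INT: "(\<And>i. i \<in> I \<Longrightarrow> line_closed (L i)) \<Longrightarrow> line_closed (\<Inter>i\<in>I. L i)"
  by (simp add: line_closed_def)

lemma line_closed_preserving:
  assumes S: "fv.subspace S" shows "line_closed (preserving N S)"
  unfolding line_closed_def preserving_def
proof (intro ballI allI, clarify)
  fix A1 A2 t
  assume A: "A1 \<in> mats N" "A2 \<in> mats N"
    and into: "mat_vec N A1 ` S \<subseteq> S" "mat_vec N A2 ` S \<subseteq> S"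
  have "mat_vec N (line A1 A2 t) v \<in> S" if "v \<in> S" for v
    unfolding mat_vec_line using S into that
    by (intro fv.subspace_add fv.subspace_scale fv.subspace_diff) auto
  then show "line A1 A2 t \<in> mats N \<and> mat_vec N (line A1 A2 t) ` S \<subseteq> S"
    using line_mats[OF A] by blast
qed

text \<open>The invertible matrices in a line-closed set form a Zariski connected set: on the line
  through two of them, all but finitely many points are invertible (the determinant is a
  polynomial that is nonzero at 0), so two closed sets covering the set would have to
  contain the whole line, one of them therefore both endpoints.\<close>

lemma GL_Int_line_closed_connected:
  assumes L: "line_closed L" shows "zariski_connected N (GL N \<inter> L)"
  unfolding zariski_connected_def
proof (intro notI, elim exE conjE)
  fix C1 C2
  assume C: "zariski_closed N C1" "zariski_closed N C2" "GL N \<inter> L \<subseteq> C1 \<union> C2"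
      "GL N \<inter> L \<inter> C1 \<inter> C2 = {}" "GL N \<inter> L \<inter> C1 \<noteq> {}" "GL N \<inter> L \<inter> C2 \<noteq> {}"
  obtain A1 where A1: "A1 \<in> GL N \<inter> L" "A1 \<in> C1" using C(5) by blast
  obtain A2 where A2: "A2 \<in> GL N \<inter> L" "A2 \<in> C2" using C(6) by blast
  have M: "A1 \<in> mats N" "A2 \<in> mats N" using A1(1) A2(1) by (simp_all add: GL_iff_det)
  obtain q where q: "\<forall>t. poly q t = det (to_mat N (line A1 A2 t))" using det_on_line by blast
  have "poly q 0 \<noteq> 0" using q A1(1) by (simp add: GL_iff_det)
  then have finite_zeros: "finite {t. poly q t = 0}" by (intro poly_roots_finite) auto
  have cover: "UNIV \<subseteq> {t. line A1 A2 t \<in> C1} \<union> {t. line A1 A2 t \<in> C2} \<union> {t. poly q t = 0}"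
  proof
    fix t :: complex
    assume "t \<in> UNIV"
    have "line A1 A2 t \<in> GL N \<inter> L" if "poly q t \<noteq> 0"
      using that q line_mats[OF M] L A1(1) A2(1) by (auto simp: GL_iff_det line_closed_def)
    then show "t \<in> {t. line A1 A2 t \<in> C1} \<union> {t. line A1 A2 t \<in> C2} \<union> {t. poly q t = 0}"
      using C(3) by blast
  qed
  have "\<not> (\<forall>t. line A1 A2 t \<in> C1)" "\<not> (\<forall>t. line A1 A2 t \<in> C2)"
    using line_1[of A1 A2] line_0[of A1 A2] A1 A2 C(4) by (metis IntI empty_iff)+
  then have "finite {t. line A1 A2 t \<in> C1}" "finite {t. line A1 A2 t \<in> C2}"
    using closed_on_line[OF C(1) M] closed_on_line[OF C(2) M] by blast+
  then have "finite (UNIV :: complex set)"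
    using finite_zeros cover by (meson finite_UnI finite_subset)
  then show False using infinite_UNIV_char_0 by blast
qed

theorem proposition1:
  fixes m n :: nat and g F :: "nat \<Rightarrow> nat \<Rightarrow> complex"
  assumes "g \<in> GL (m + n)" and "F \<in> GL (m + n)"
  shows "zariski_connected (m + n)
     {A \<in> GL (m + n).
        mat_vec (m + n) A ` span_cols (m + n) g {0..<m} = span_cols (m + n) g {0..<m} \<and>
        mat_vec (m + n) A ` span_cols (m + n) g {m..<m + n} = span_cols (m + n) g {m..<m + n} \<and>
        (\<forall>i \<le> m + n. mat_vec (m + n) A ` flag_space (m + n) F i = flag_space (m + n) F i)}"
proof -
  let ?N = "m + n"
  let ?P = "\<lambda>S. preserving ?N S"
  define L where "L = ?P (span_cols ?N g {0..<m}) \<inter> ?P (span_cols ?N g {m..<?N}) \<inter>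
    (\<Inter>i\<in>{..?N}. ?P (flag_space ?N F i))"
  have "line_closed L"
    unfolding L_def flag_space_def
    by (intro line_closed_Int line_closed_INT line_closed_preserving span_cols_subspace)
  moreover have "A \<in> L \<longleftrightarrow>
        mat_vec ?N A ` span_cols ?N g {0..<m} = span_cols ?N g {0..<m} \<and>
        mat_vec ?N A ` span_cols ?N g {m..<?N} = span_cols ?N g {m..<?N} \<and>
        (\<forall>i \<le> ?N. mat_vec ?N A ` flag_space ?N F i = flag_space ?N F i)"
    if A: "A \<in> GL ?N" for A
    unfolding L_def flag_space_def by (simp add: GL_stabilises_iff_preserving[OF A]) auto
  ultimately show ?thesis
    using GL_Int_line_closed_connected[of L ?N] by (simp add: Int_def conj_commute cong: conj_cong)
qed

end
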